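(* Let $q$ be a prime power, $m>3$, $n=q^m-1$, and define $Z_{des}=\{(x,y): 1\le x,y<n,\ xy<q^m-1-q^{\lfloor m/2\rfloor}\}$ and, for integers $0\le k\le (m-1)/2$, $Z_{des,k}=\{(x,y)\in Z_{des}: q^k-1<x\le q^{k+1}-1\}$. For $l\in\{0,1,\dots,m-1\}$ let $f(x,y,l)=(-xq^l\bmod n)\,(-yq^l\bmod n)$, where $a\bmod n\in\{0,\dots,n-1\}$. Then: (a) For every $0\le k\le (m-1)/2$, every $(x,y)\in Z_{des,k}$ and every $l\in\{0,\dots,m-1\}$ with $l\ne m-k-1$, one has $f(x,y,l)\ge q^m-1-q^{\lceil m/2\rceil-1}$, and this value is attained (for $k=0$, $x=1$, $y=q^m-1-q^{\lfloor m/2\rfloor+1}$, $l=\lceil m/2\rceil-1$). (b) For every $0\le k\le (m-1)/2$, every $(x,y)\in Z_{des,k}$ and $l=m-k-1$: if $m$ is odd then $f(x,y,l)\ge q^m-1$; if $m$ is even then $f(x,y,l)\ge (q^{m/2}-1)^2$, with equality attained at $k=m/2-1$, $l=m/2$, $x=y=q^{m/2}-1$.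
   Context: Here $a\bmod n$ denotes the least nonnegative residue of $a$ modulo $n$. *)

theory Defs
  imports "HOL-Computational_Algebra.Primes"
begin

definition prime_power :: "nat \<Rightarrow> bool" where
  "prime_power q \<longleftrightarrow> (\<exists>p e. prime p \<and> e \<ge> 1 \<and> q = p ^ e)"

definition Zdes :: "nat \<Rightarrow> nat \<Rightarrow> (int \<times> int) set" where
  "Zdes q m = {(x, y). 1 \<le> x \<and> x < int q ^ m - 1 \<and> 1 \<le> y \<and> y < int q ^ m - 1
                  \<and> x * y < int q ^ m - 1 - int q ^ (m div 2)}"

definition Zdes_k :: "nat \<Rightarrow> nat \<Rightarrow> nat \<Rightarrow> (int \<times> int) set" where
  "Zdes_k q m k = {(x, y) \<in> Zdes q m. int q ^ k - 1 < x \<and> x \<le> int q ^ (k + 1) - 1}"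

definition fval :: "nat \<Rightarrow> nat \<Rightarrow> int \<Rightarrow> int \<Rightarrow> nat \<Rightarrow> int" where
  "fval q m x y l = ((- x * int q ^ l) mod (int q ^ m - 1)) * ((- y * int q ^ l) mod (int q ^ m - 1))"

end

theory Submission
  imports Defs
begin

text \<open>Write \<open>n = Q^m - 1\<close> with \<open>Q = q\<close> and split \<open>Q^m = s t\<close> with \<open>t = Q^l\<close>, \<open>s = Q^(m-l)\<close>.
  Since \<open>s t \<equiv> 1 (mod n)\<close>, the residue \<open>A\<close> of \<open>-x t\<close> satisfies \<open>A s \<equiv> -x\<close>, so
  \<open>A s + x \<ge> n\<close>, and \<open>A = n - x t\<close> exactly when \<open>x < s\<close>. If \<open>x < s\<close> and \<open>l \<noteq> m-k-1\<close>,
  then even \<open>Q x < s\<close>, so \<open>A > n/2\<close>; the product can only drop below \<open>n\<close> when the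
  second residue is \<open>1\<close>, which forces \<open>x = 1\<close> and \<open>t \<le> Q^(\<lceil>m/2\<rceil>-1)\<close>. If \<open>x \<ge> s\<close>, both
  residues are at least \<open>t(s-1)/s\<close> and the product exceeds \<open>s t = Q^m\<close>.
  For \<open>l = m-k-1\<close> we have \<open>s = Q^(k+1) > x\<close>, so \<open>A = t (s - x) - 1\<close>. If also \<open>y < s\<close>, both
  residues are at least \<open>t - 1\<close>, which suffices unless \<open>m\<close> is odd and \<open>k = \<lfloor>m/2\<rfloor>\<close>; there
  \<open>s = Q t\<close> and the product is estimated directly. If \<open>y \<ge> s\<close>, the condition
  \<open>x y < n - Q^\<lfloor>m/2\<rfloor>\<close> forces \<open>s \<le> t\<close>, and the cases \<open>x = 1\<close>, \<open>2 \<le> x \<le> s - 2\<close>, \<open>x = s - 1\<close>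
  each reduce to an elementary inequality.\<close>

lemma neg_mult_mod_cofactor:
  fixes s t n u :: int
  assumes st: "s * t = n + 1" and s: "0 < s" and u: "0 < u" "u < n"
  shows neg_mult_mod_ge_1: "1 \<le> (-u * t) mod n"
    and neg_mult_mod_mult_cofactor: "n \<le> ((-u * t) mod n) * s + u"
proof -
  define a where "a = (-u * t) mod n"
  have "(a * s + u) mod n = ((-u * t) * s + u) mod n"
    by (rule mod_add_cong[OF mod_mult_cong]) (simp_all add: a_def)
  also have "\<dots> = (-u * (s * t) + u) mod n" by (simp add: algebra_simps)
  also have "\<dots> = 0" unfolding st by (simp add: algebra_simps)
  finally have dvd: "n dvd a * s + u" by (simp add: dvd_eq_mod_eq_0)
  have "0 \<le> a" unfolding a_def using u by simp
  then have "0 < a * s + u" using s u by (simp add: add_nonneg_pos)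
  with dvd show "n \<le> a * s + u" by (simp add: zdvd_imp_le)
  show "1 \<le> a"
  proof (rule ccontr)
    assume "\<not> 1 \<le> a"
    with \<open>0 \<le> a\<close> have "a = 0" by simp
    with dvd have "n dvd u" by simp
    then show False using u zdvd_imp_le by fastforce
  qed
qed

lemma neg_mult_mod_eq_diff:
  fixes s t n u :: int
  assumes st: "s * t = n + 1" and t: "0 < t" and u: "0 < u" "u < s"
  shows "(-u * t) mod n = n - u * t"
proof -
  have "u * t \<le> (s - 1) * t" using u t by (intro mult_right_mono) auto
  then have "u * t \<le> n" using st t by (simp add: algebra_simps)
  moreover have "0 < u * t" using u t by simp
  ultimately have "(n - u * t) mod n = n - u * t" by (intro mod_pos_pos_trivial) auto
  moreover have "(-u * t) mod n = (n + (-u * t)) mod n" by simp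
  ultimately show ?thesis by simp
qed

lemma cube_le_mult_pred_square:
  fixes s t :: int
  assumes "2 \<le> s" and "(4 \<le> s \<and> 2 * s \<le> t) \<or> 4 * s \<le> t"
  shows "s^3 \<le> t * (s - 1)^2"
proof -
  obtain c where c: "c * s \<le> t" "s^2 \<le> c * (s - 1)^2"
  proof (cases "4 \<le> s \<and> 2 * s \<le> t")
    case True
    have "0 \<le> s * (s - 4)" using True by simp
    then have "s^2 \<le> 2 * (s - 1)^2" by (simp add: power2_eq_square algebra_simps)
    with True show ?thesis using that[of 2] by simp
  next
    case False
    have "0 \<le> (s - 2) * (3 * s - 2)" using assms(1) by simp
    then have "s^2 \<le> 4 * (s - 1)^2" by (simp add: power2_eq_square algebra_simps)
    moreover have "4 * s \<le> t" using False assms(2) by blast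
    ultimately show ?thesis using that[of 4] by simp
  qed
  have "s^3 = s * s^2" by (simp add: power3_eq_cube power2_eq_square)
  also have "\<dots> \<le> s * (c * (s - 1)^2)" using c assms(1) by (intro mult_left_mono) auto
  also have "\<dots> = (c * s) * (s - 1)^2" by (simp add: algebra_simps)
  also have "\<dots> \<le> t * (s - 1)^2" using c(1) by (intro mult_right_mono) auto
  finally show ?thesis .
qed

lemma mult_ge_of_cofactor_bounds:
  fixes a b s t :: int
  assumes "2 \<le> s" "1 \<le> t" and a: "t * (s - 1) \<le> a * s" and b: "t * (s - 1) \<le> b * s"
    and cube: "s^3 \<le> t * (s - 1)^2"
  shows "s * t \<le> a * b"
proof -
  have nonneg: "0 \<le> t * (s - 1)" using assms(1,2) by simp
  have "(s * t) * (s * s) = t * s^3" by (simp add: power3_eq_cube algebra_simps)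
  also have "\<dots> \<le> t * (t * (s - 1)^2)" using cube assms(2) by (intro mult_left_mono) auto
  also have "\<dots> = (t * (s - 1)) * (t * (s - 1))" by (simp add: power2_eq_square algebra_simps)
  also have "\<dots> \<le> (a * s) * (b * s)" by (rule mult_mono[OF a b order_trans[OF nonneg a] nonneg])
  also have "\<dots> = (a * b) * (s * s)" by (simp add: algebra_simps)
  finally show ?thesis using assms(1) by (simp add: mult_le_cancel_right)
qed

lemma mult_ge_of_double_cofactor_bound:
  fixes a b s t p :: int
  assumes s: "1 \<le> s" "s \<le> t" "s \<le> p" and a: "2 * t - 1 \<le> a" and b: "s * t + p \<le> 2 * (b * s)"
  shows "s * t \<le> a * b"
proof -
  have "(s * t) * (2 * s) \<le> (t * t) * (2 * s)" using s by (intro mult_right_mono) auto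
  also have "\<dots> \<le> (2 * t - 1) * (s * t + s)" using s by (simp add: algebra_simps)
  also have "\<dots> \<le> a * (2 * (b * s))" using a b s by (intro mult_mono) auto
  also have "\<dots> = (a * b) * (2 * s)" by (simp add: algebra_simps)
  finally show ?thesis using s by (simp add: mult_le_cancel_right)
qed

lemma mult_ge_of_pred_cofactor_bound:
  fixes b s t N :: int
  assumes s: "3 \<le> s" and N: "0 \<le> N" and b: "(s - 2) * N \<le> (s - 1) * (b * s)"
    and st: "s * (s - 1) \<le> (t - 1) * (s - 2)"
  shows "N \<le> (t - 1) * b"
proof -
  have "0 < s * (s - 1)" using s by simp
  then have "0 < (t - 1) * (s - 2)" using st by linarith
  then have "0 \<le> t - 1" using s by (simp add: zero_less_mult_iff)
  have "N * (s * (s - 1)) \<le> N * ((t - 1) * (s - 2))" using st N by (intro mult_left_mono)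
  also have "\<dots> = (t - 1) * ((s - 2) * N)" by (simp add: algebra_simps)
  also have "\<dots> \<le> (t - 1) * ((s - 1) * (b * s))" using b \<open>0 \<le> t - 1\<close> by (intro mult_left_mono)
  also have "\<dots> = ((t - 1) * b) * (s * (s - 1))" by (simp add: algebra_simps)
  finally show ?thesis using \<open>0 < s * (s - 1)\<close> by (simp add: mult_le_cancel_right)
qed

lemma pred_product_le:
  fixes Q s t :: int
  assumes "2 \<le> Q" "3 \<le> s" "Q * s \<le> t" "s = 3 \<Longrightarrow> 3 \<le> Q"
  shows "s * (s - 1) \<le> (t - 1) * (s - 2)"
proof (cases "s = 3")
  case True
  then have "9 \<le> t" using assms mult_right_mono[of 3 Q 3] by simp
  with True show ?thesis by simp
next
  case False
  have "2 * s \<le> Q * s" using assms by (intro mult_right_mono) auto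
  then have "2 * s - 1 \<le> t - 1" using assms by linarith
  then have "(2 * s - 1) * (s - 2) \<le> (t - 1) * (s - 2)" using assms by (intro mult_right_mono) auto
  moreover have "0 \<le> s * (s - 4)" using False assms by simp
  ultimately show ?thesis by (simp add: algebra_simps)
qed

text \<open>The case \<open>m\<close> odd, \<open>k = \<lfloor>m/2\<rfloor>\<close>, \<open>l = m-k-1\<close>: then \<open>s = Q t\<close>, and \<open>X = s - x\<close>, \<open>Y = s - y\<close>.\<close>

lemma middle_product_bound:
  fixes Q t X Y :: int
  assumes Q: "2 \<le> Q" "Q + 2 \<le> t" and XY: "1 \<le> X" "1 \<le> Y"
    and hyp: "(Q * t - X) * (Q * t - Y) \<le> Q * t * t - t - 2"
  shows "Q * t * t \<le> (t * X - 1) * (t * Y - 1)"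
proof -
  have sum_le: "X + Y - 1 \<le> X * Y"
  proof -
    have "0 \<le> (X - 1) * (Y - 1)" using XY by simp
    then show ?thesis by (simp add: algebra_simps)
  qed
  have "0 < X * Y" using XY by simp
  then have "(Q * t) * (Q * t - t) < (Q * t) * (X + Y)"
    using hyp Q by (simp add: algebra_simps)
  then have "Q * t - t < X + Y" using Q by (simp add: mult_less_cancel_left)
  moreover have "t \<le> Q * t - t" using Q mult_right_mono[of 2 Q t] by simp
  ultimately have "t \<le> X * Y" using sum_le by simp
  have "t * t * (t - 1) \<ge> t * t * (Q + 1)" using Q by (intro mult_left_mono) auto
  moreover have "t * 1 \<le> t * t" using Q by (intro mult_left_mono) auto
  ultimately have "Q * t * t + t \<le> t * (t * t - t)" by (simp add: algebra_simps)
  also have "\<dots> \<le> (X * Y) * (t * t - t)"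
    using \<open>t \<le> X * Y\<close> Q by (intro mult_right_mono) (auto simp: algebra_simps)
  finally have "Q * t * t \<le> (X * Y) * (t * t - t) - t" by simp
  also have "\<dots> \<le> t * t * (X * Y) - t * (X + Y) + 1"
    using mult_left_mono[OF sum_le, of t] Q by (simp add: algebra_simps)
  also have "\<dots> = (t * X - 1) * (t * Y - 1)" by (simp add: algebra_simps)
  finally show ?thesis .
qed

text \<open>\<open>Q\<close> stands for \<open>int q\<close>; the products \<open>((-x * Q^l) mod (Q^m - 1)) * ((-y * Q^l) mod (Q^m - 1))\<close>
  below are \<open>fval q m x y l\<close>.\<close>

context
  fixes Q :: int and m :: nat
  assumes Q_ge_2: "2 \<le> Q" and m_gt_3: "3 < m"
begin

lemma Q_gt_1: "1 < Q"
  using Q_ge_2 by simp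

lemma Q_pow_ge_1: "1 \<le> Q^a"
  using Q_ge_2 by simp

lemma Q_pow_pos: "0 < Q^a"
  using Q_ge_2 by simp

lemma Q_pow_mono: "a \<le> b \<Longrightarrow> Q^a \<le> Q^b"
  using Q_ge_2 by (simp add: power_increasing)

lemma Q_le_pow: "0 < a \<Longrightarrow> Q \<le> Q^a"
  using Q_ge_2 by (simp add: self_le_power)

lemma Q_square_ge_4: "4 \<le> Q^2"
  using Q_ge_2 power_mono[of 2 Q 2] by simp

lemma Q_pow_split: "a \<le> m \<Longrightarrow> Q^(m - a) * Q^a = Q^m"
  by (simp add: power_add[symmetric])

lemma Q_pow_diag_split: "k < m \<Longrightarrow> Q^(k + 1) * Q^(m - k - 1) = Q^m"
  unfolding power_add[symmetric] by simp

lemma Q_pow_half_square: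
  assumes "even m"
  shows "Q^m = Q^(m div 2) * Q^(m div 2)"
proof -
  have "m div 2 + m div 2 = m" using assms by presburger
  then show ?thesis unfolding power_add[symmetric] by simp
qed

lemma unit_residue_forces_x_eq_1:
  assumes l: "l < m" and x: "1 \<le> x" and y: "1 \<le> y" "y < Q^m - 1"
    and xy: "x * y < Q^m - 1 - Q^(m div 2)"
    and unit: "(-y * Q^l) mod (Q^m - 1) = 1"
  shows "x = 1 \<and> l < (m + 1) div 2"
proof -
  define n s t where "n = Q^m - 1" and "s = Q^(m - l)" and "t = Q^l"
  have st: "s * t = n + 1" unfolding n_def s_def t_def using l Q_pow_split by simp
  have "n \<le> s + y"
    using neg_mult_mod_mult_cofactor[OF st _ _ y(2)[folded n_def]] unit y(1) Q_pow_pos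
    unfolding n_def s_def t_def by simp
  have "l \<noteq> 0"
  proof
    assume "l = 0"
    then have "n - y * t = 1"
      using neg_mult_mod_eq_diff[OF st] unit y Q_pow_ge_1 unfolding n_def s_def t_def by simp
    moreover have "y \<le> x * y" using x y by simp
    ultimately show False using xy \<open>l = 0\<close> Q_pow_ge_1[of "m div 2"] unfolding n_def s_def t_def by simp
  qed
  then have "2 * s \<le> n + 1"
    using st Q_ge_2 Q_le_pow[of l] mult_left_mono[of 2 t s] Q_pow_pos unfolding s_def t_def
    by (simp add: mult.commute)
  have "x = 1"
  proof (rule ccontr)
    assume "x \<noteq> 1"
    then have "2 * y \<le> x * y" using x y by (intro mult_right_mono) auto
    then show False using xy \<open>n \<le> s + y\<close> \<open>2 * s \<le> n + 1\<close> Q_pow_ge_1[of "m div 2"] unfolding n_def by simp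
  qed
  with xy \<open>n \<le> s + y\<close> have "Q^(m div 2) < Q^(m - l)" unfolding n_def s_def t_def by simp
  then have "m div 2 < m - l" using Q_gt_1 by simp
  with \<open>x = 1\<close> show ?thesis by auto
qed

lemma residue_product_bound_small_x:
  assumes l: "l < m" and x: "1 \<le> x" "Q * x < Q^(m - l)" and y: "1 \<le> y" "y < Q^m - 1"
    and xy: "x * y < Q^m - 1 - Q^(m div 2)"
  shows "Q^m - 1 - Q^((m + 1) div 2 - 1)
           \<le> ((-x * Q^l) mod (Q^m - 1)) * ((-y * Q^l) mod (Q^m - 1))"
proof -
  define n s t where "n = Q^m - 1" and "s = Q^(m - l)" and "t = Q^l"
  define A B where "A = (-x * t) mod n" and "B = (-y * t) mod n"
  have st: "s * t = n + 1" unfolding n_def s_def t_def using l Q_pow_split by simp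
  have t: "1 \<le> t" unfolding t_def by (rule Q_pow_ge_1)
  have "x \<le> Q * x" using x Q_ge_2 by simp
  then have "x < s" using x unfolding s_def by linarith
  then have A: "A = n - x * t" unfolding A_def using neg_mult_mod_eq_diff[OF st] x t by simp
  have "Q * x * t \<le> (s - 1) * t" using x t unfolding s_def by (intro mult_right_mono) auto
  moreover have "2 * x * t \<le> Q * x * t" using Q_ge_2 x t by (intro mult_right_mono) auto
  ultimately have two_xt: "2 * (x * t) \<le> n + 1 - t" using st by (simp add: algebra_simps)
  have "1 \<le> B" unfolding B_def
    using neg_mult_mod_ge_1[OF st _ _ y(2)[folded n_def]] y(1) Q_pow_pos unfolding s_def by simp
  show ?thesis
  proof (cases "B = 1")
    case True
    then have "x = 1 \<and> l < (m + 1) div 2"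
      using unit_residue_forces_x_eq_1[OF l x(1) y xy] unfolding B_def n_def t_def by simp
    then have "x = 1" and "t \<le> Q^((m + 1) div 2 - 1)" unfolding t_def using Q_gt_1 by auto
    with A True show ?thesis unfolding A_def B_def n_def t_def by simp
  next
    case False
    have "0 < x * t" using x t by simp
    then have "0 \<le> A" using A two_xt t by simp
    then have "A * 2 \<le> A * B" using False \<open>1 \<le> B\<close> by (intro mult_left_mono) auto
    then show ?thesis using A two_xt t Q_pow_ge_1[of "(m + 1) div 2 - 1"]
      unfolding A_def B_def n_def t_def by simp
  qed
qed

lemma cofactor_growth:
  assumes "l < m" and "m - l + 1 \<le> l"
  shows "(4 \<le> Q^(m - l) \<and> 2 * Q^(m - l) \<le> Q^l) \<or> 4 * Q^(m - l) \<le> Q^l"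
proof (cases "l = m - 1")
  case True
  have "Suc (m - 2) = l" using True m_gt_3 by simp
  then have "Q^l = Q^(m - 2) * Q" by (metis power_Suc2)
  moreover have "4 \<le> Q^(m - 2)"
    using Q_square_ge_4 Q_pow_mono[of 2 "m - 2"] m_gt_3 by linarith
  ultimately have "4 * Q \<le> Q^l" using Q_ge_2 by (simp add: mult_right_mono)
  then show ?thesis using True \<open>l < m\<close> by simp
next
  case False
  then have "Q^2 \<le> Q^(m - l)" using \<open>l < m\<close> by (intro Q_pow_mono) linarith
  moreover have "Q * Q^(m - l) \<le> Q^l"
    using \<open>m - l + 1 \<le> l\<close> Q_pow_mono by (metis power_Suc Suc_eq_plus1)
  moreover have "2 * Q^(m - l) \<le> Q * Q^(m - l)" using Q_ge_2 by (intro mult_right_mono) auto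
  ultimately show ?thesis using Q_square_ge_4 by linarith
qed

lemma residue_product_bound_large_x:
  assumes l: "l < m" and x: "Q^(m - l) \<le> x" "x < Q^((m + 1) div 2)" "x < Q^m - 1"
    and y: "1 \<le> y" "y < Q^m - 1" and xy: "x * y < Q^m - 1 - Q^(m div 2)"
  shows "Q^m \<le> ((-x * Q^l) mod (Q^m - 1)) * ((-y * Q^l) mod (Q^m - 1))"
proof -
  define n s t where "n = Q^m - 1" and "s = Q^(m - l)" and "t = Q^l"
  have st: "s * t = n + 1" unfolding n_def s_def t_def using l Q_pow_split by simp
  have s: "Q \<le> s" unfolding s_def using l Q_le_pow by simp
  have "Q^(m - l) < Q^((m + 1) div 2)" using x by simp
  then have "m - l < (m + 1) div 2" using Q_gt_1 by simp
  then have l_gt: "m div 2 < l" "m - l + 1 \<le> l" by auto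
  have "x < t"
  proof -
    have "Q^((m + 1) div 2) \<le> Q^l" using l_gt Q_gt_1 by simp
    with x show ?thesis unfolding t_def by simp
  qed
  have "y < t"
  proof -
    have "s * y \<le> x * y" using x y unfolding s_def by (intro mult_right_mono) auto
    then have "s * y < s * t" using xy st Q_pow_ge_1[of "m div 2"] unfolding n_def by simp
    then show ?thesis using s Q_ge_2 by simp
  qed
  have cofactor: "t * (s - 1) \<le> ((-u * t) mod n) * s" if "1 \<le> u" "u < n" "u < t" for u
    using neg_mult_mod_mult_cofactor[OF st _ _ that(2)] that(1,3) s Q_ge_2 st
    by (simp add: algebra_simps)
  have "(4 \<le> s \<and> 2 * s \<le> t) \<or> 4 * s \<le> t"
    unfolding s_def t_def using l l_gt(2) by (rule cofactor_growth)
  then have cube: "s^3 \<le> t * (s - 1)^2" using s Q_ge_2 by (intro cube_le_mult_pred_square) auto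
  have "1 \<le> x" using x(1) s Q_ge_2 unfolding s_def by linarith
  have "s * t \<le> ((-x * t) mod n) * ((-y * t) mod n)"
  proof (rule mult_ge_of_cofactor_bounds[OF _ _ _ _ cube])
    show "2 \<le> s" "1 \<le> t" using s Q_ge_2 Q_pow_ge_1[of l] unfolding t_def by auto
    show "t * (s - 1) \<le> (-x * t) mod n * s"
      using cofactor \<open>1 \<le> x\<close> x(3) \<open>x < t\<close> unfolding n_def by blast
    show "t * (s - 1) \<le> (-y * t) mod n * s"
      using cofactor y \<open>y < t\<close> unfolding n_def by blast
  qed
  then show ?thesis using st unfolding n_def t_def by simp
qed

lemma residue_product_bound_offdiag:
  assumes k: "2 * k + 1 \<le> m" and l: "l < m" "l \<noteq> m - k - 1"
    and x: "Q^k \<le> x" "x < Q^(k + 1)" "x < Q^m - 1" and y: "1 \<le> y" "y < Q^m - 1"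
    and xy: "x * y < Q^m - 1 - Q^(m div 2)"
  shows "Q^m - 1 - Q^((m + 1) div 2 - 1)
           \<le> ((-x * Q^l) mod (Q^m - 1)) * ((-y * Q^l) mod (Q^m - 1))"
proof (cases "x < Q^(m - l)")
  case True
  with x(1) have "Q^k < Q^(m - l)" by simp
  then have "k < m - l" using Q_gt_1 by simp
  with l have "k + 2 \<le> m - l" by auto
  have "Q * x < Q * Q^(k + 1)" using x(2) Q_ge_2 by simp
  also have "\<dots> \<le> Q^(m - l)" using \<open>k + 2 \<le> m - l\<close> Q_gt_1 by (simp flip: power_Suc)
  finally have "Q * x < Q^(m - l)" .
  then show ?thesis
    using residue_product_bound_small_x[OF l(1) _ _ y xy] Q_pow_ge_1[of k] x(1) by simp
next
  case False
  have "k + 1 \<le> (m + 1) div 2" using k by linarith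
  then have "Q^(k + 1) \<le> Q^((m + 1) div 2)" using Q_ge_2 by (intro power_increasing) auto
  then have "Q^m \<le> ((-x * Q^l) mod (Q^m - 1)) * ((-y * Q^l) mod (Q^m - 1))"
    using residue_product_bound_large_x[OF l(1) _ _ x(3) y xy] False x(2) by simp
  then show ?thesis using Q_pow_ge_1[of "(m + 1) div 2 - 1"] by simp
qed

lemma diag_residue:
  assumes "k < m" and "1 \<le> u" "u < Q^(k + 1)"
  shows "(-u * Q^(m - k - 1)) mod (Q^m - 1) = Q^(m - k - 1) * (Q^(k + 1) - u) - 1"
  using neg_mult_mod_eq_diff[of "Q^(k + 1)" "Q^(m - k - 1)" "Q^m - 1" u] assms Q_pow_diag_split Q_pow_pos
  by (simp add: algebra_simps)

lemma residue_product_bound_diag_x_eq_1: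
  assumes y: "1 \<le> y" "y < Q^m - 1 - Q^(m div 2)"
  shows "Q^m \<le> ((-1 * Q^(m - 1)) mod (Q^m - 1)) * ((-y * Q^(m - 1)) mod (Q^m - 1))"
proof -
  define n t where "n = Q^m - 1" and "t = Q^(m - 1)"
  define B where "B = (-y * t) mod n"
  have st: "Q * t = n + 1" unfolding n_def t_def using m_gt_3 Q_pow_split[of 1] by (simp add: mult.commute)
  have "Q^2 \<le> t" unfolding t_def using m_gt_3 Q_gt_1 by simp
  moreover have "2 * Q \<le> Q * Q" using Q_ge_2 by (intro mult_right_mono) auto
  ultimately have t: "Q + 2 \<le> t" using Q_ge_2 unfolding power2_eq_square by linarith
  have A: "(-1 * t) mod n \<ge> t - 1"
    using neg_mult_mod_eq_diff[OF st, of 1] st Q_ge_2 t mult_right_mono[of 2 Q t] by simp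
  have "y < n" using y Q_pow_ge_1[of "m div 2"] unfolding n_def by simp
  then have "Q^(m div 2) < B * Q"
    using neg_mult_mod_mult_cofactor[OF st, of y] y Q_ge_2 unfolding B_def n_def by simp
  moreover have "Q^(m div 2) = Q * Q^(m div 2 - 1)" using m_gt_3 by (simp flip: power_Suc)
  ultimately have "Q^(m div 2 - 1) < B" using Q_ge_2 by (simp add: mult.commute)
  moreover have "Q \<le> Q^(m div 2 - 1)" using m_gt_3 by (intro Q_le_pow) auto
  ultimately have B: "Q + 1 \<le> B" by simp
  have "Q * t \<le> (t - 1) * (Q + 1)" using t by (simp add: algebra_simps)
  also have "\<dots> \<le> ((-1 * t) mod n) * B" using A B t Q_ge_2 by (intro mult_mono) auto
  finally show ?thesis using st unfolding n_def t_def B_def by simp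
qed

lemma diag_large_y_imp_small_k:
  assumes "k < m" and x: "Q^k \<le> x" and y: "Q^(k + 1) \<le> y" and xy: "x * y < Q^m - 1 - Q^(m div 2)"
  shows "k + 1 \<le> m - k - 1"
proof -
  define s t where "s = Q^(k + 1)" and "t = Q^(m - k - 1)"
  have st: "s * t = Q^m" unfolding s_def t_def using \<open>k < m\<close> by (rule Q_pow_diag_split)
  have "0 < s" unfolding s_def by (rule Q_pow_pos)
  have "s \<le> Q * x" using x Q_ge_2 unfolding s_def by simp
  have "s * s \<le> (Q * x) * y" using \<open>s \<le> Q * x\<close> y \<open>0 < s\<close> unfolding s_def by (intro mult_mono) auto
  also have "\<dots> < Q * (s * t)"
  proof -
    have "x * y < s * t" using xy st Q_pow_ge_1[of "m div 2"] by linarith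
    then show ?thesis using Q_ge_2 by (simp add: mult.assoc)
  qed
  finally have "s < Q * t" using \<open>0 < s\<close> by (simp add: algebra_simps)
  then show ?thesis using Q_gt_1 unfolding s_def t_def by simp
qed

lemma residue_product_bound_diag_x_eq_pred:
  assumes k: "2 * k + 1 \<le> m" and x: "x = Q^(k + 1) - 1" "2 \<le> x"
    and y: "Q^(k + 1) \<le> y" "y < Q^m - 1" and xy: "x * y < Q^m - 1 - Q^(m div 2)"
  shows "Q^m \<le> ((-x * Q^(m - k - 1)) mod (Q^m - 1)) * ((-y * Q^(m - k - 1)) mod (Q^m - 1))"
proof -
  define n s t where "n = Q^m - 1" and "s = Q^(k + 1)" and "t = Q^(m - k - 1)"
  define B where "B = (-y * t) mod n"
  have st: "s * t = n + 1" unfolding n_def s_def t_def using k Q_pow_diag_split by simp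
  have s: "x = s - 1" "3 \<le> s" "s \<le> y" using x y unfolding s_def by auto
  have "(-x * t) mod n = t - 1" using diag_residue[of k x] k x unfolding n_def s_def t_def by simp
  have "k + 1 \<le> m - k - 1" using k x y(1) xy Q_pow_ge_1[of k] Q_gt_1 by (intro diag_large_y_imp_small_k) auto
  then have "s \<le> Q^(m div 2)" unfolding s_def by (intro Q_pow_mono) linarith
  have "(s - 2) * (n + 1) \<le> (s - 1) * (B * s)"
  proof -
    have "(s - 2) * (n + 1) \<le> (s - 1) * (n - y)"
      using xy s \<open>s \<le> Q^(m div 2)\<close> unfolding n_def by (simp add: algebra_simps)
    also have "\<dots> \<le> (s - 1) * (B * s)"
      using neg_mult_mod_mult_cofactor[OF st, of y] y s unfolding B_def n_def
      by (intro mult_left_mono) auto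
    finally show ?thesis .
  qed
  moreover have "s * (s - 1) \<le> (t - 1) * (s - 2)"
  proof (rule pred_product_le[OF Q_ge_2 \<open>3 \<le> s\<close>])
    have "(s - 1) * s \<le> (s - 1) * y" using s by (intro mult_left_mono) auto
    then have "s * s < s * t" using xy s st \<open>s \<le> Q^(m div 2)\<close> unfolding n_def by (simp add: algebra_simps)
    then have "s < t" using s by simp
    then have "Suc (k + 1) \<le> m - k - 1"
      using power_strict_increasing_iff[OF Q_gt_1, of "k + 1" "m - k - 1"] unfolding s_def t_def by simp
    then show "Q * s \<le> t" using Q_pow_mono unfolding s_def t_def by (metis power_Suc)
    show "3 \<le> Q" if "s = 3"
    proof (rule ccontr)
      assume "\<not> 3 \<le> Q"
      then have "Q = 2" using Q_ge_2 by simp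
      then have "even s" unfolding s_def by simp
      with that show False by simp
    qed
  qed
  moreover have "0 \<le> n + 1" unfolding st[symmetric] using s Q_pow_pos[of "m - k - 1"] unfolding t_def by simp
  ultimately have "n + 1 \<le> (t - 1) * B" using mult_ge_of_pred_cofactor_bound \<open>3 \<le> s\<close> by blast
  then show ?thesis using \<open>(-x * t) mod n = t - 1\<close> unfolding n_def t_def B_def by simp
qed

lemma residue_product_bound_diag_large_y:
  assumes k: "2 * k + 1 \<le> m" and x: "1 \<le> x" "Q^k \<le> x" "x < Q^(k + 1)"
    and y: "Q^(k + 1) \<le> y" "y < Q^m - 1" and xy: "x * y < Q^m - 1 - Q^(m div 2)"
  shows "Q^m \<le> ((-x * Q^(m - k - 1)) mod (Q^m - 1)) * ((-y * Q^(m - k - 1)) mod (Q^m - 1))"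
proof -
  define n s t where "n = Q^m - 1" and "s = Q^(k + 1)" and "t = Q^(m - k - 1)"
  define B where "B = (-y * t) mod n"
  have st: "s * t = n + 1" unfolding n_def s_def t_def using k Q_pow_diag_split by simp
  have "1 \<le> t" unfolding t_def by (rule Q_pow_ge_1)
  have "Q \<le> s" unfolding s_def by (intro Q_le_pow) simp
  have "s \<le> y" "x < s" using x(3) y(1) unfolding s_def by auto
  have "k + 1 \<le> m - k - 1" using k x(2) y(1) xy by (intro diag_large_y_imp_small_k) auto
  then have "s \<le> t" unfolding s_def t_def by (rule Q_pow_mono)
  have "s \<le> Q^(m div 2)" unfolding s_def using \<open>k + 1 \<le> m - k - 1\<close> by (intro Q_pow_mono) linarith
  have "n - y \<le> B * s"
    using neg_mult_mod_mult_cofactor[OF st, of y] y \<open>s \<le> y\<close> \<open>Q \<le> s\<close> Q_ge_2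
    unfolding B_def n_def by simp
  consider "x = 1" | "2 \<le> x" "x \<le> s - 2" | "x = s - 1" "2 \<le> x"
    using x(1) \<open>x < s\<close> by linarith
  then show ?thesis
  proof cases
    case 1
    then have "k = 0" using x(2) by (metis power_increasing_iff[OF Q_gt_1] power_0 le_zero_eq)
    moreover have "1 \<le> y" "y < Q^m - 1 - Q^(m div 2)" using xy 1 \<open>s \<le> y\<close> \<open>Q \<le> s\<close> Q_ge_2 by auto
    ultimately show ?thesis using residue_product_bound_diag_x_eq_1 1 by simp
  next
    case 2
    have "2 * y \<le> x * y" using 2 \<open>s \<le> y\<close> \<open>Q \<le> s\<close> Q_ge_2 by (intro mult_right_mono) auto
    then have "s * t + Q^(m div 2) \<le> 2 * (B * s)" using \<open>n - y \<le> B * s\<close> xy st unfolding n_def by linarith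
    moreover have "t * 2 \<le> t * (s - x)" using 2 \<open>1 \<le> t\<close> by (intro mult_left_mono) auto
    then have "2 * t - 1 \<le> t * (s - x) - 1" by linarith
    ultimately have "s * t \<le> (t * (s - x) - 1) * B"
      using \<open>Q \<le> s\<close> Q_ge_2 \<open>s \<le> t\<close> \<open>s \<le> Q^(m div 2)\<close> by (intro mult_ge_of_double_cofactor_bound) auto
    moreover have "(-x * t) mod n = t * (s - x) - 1"
      unfolding n_def s_def t_def using diag_residue k x by simp
    ultimately show ?thesis using st unfolding n_def t_def B_def by simp
  next
    case 3
    then show ?thesis using residue_product_bound_diag_x_eq_pred[OF k _ _ y xy] unfolding s_def by simp
  qed
qed

lemma residue_product_bound_diag_small:
  assumes "k < m" and x: "1 \<le> x" "x < Q^(k + 1)" and y: "1 \<le> y" "y < Q^(k + 1)"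
  shows "(Q^(m - k - 1) - 1)^2 \<le> ((-x * Q^(m - k - 1)) mod (Q^m - 1)) * ((-y * Q^(m - k - 1)) mod (Q^m - 1))"
proof -
  define t where "t = Q^(m - k - 1)"
  have residue: "t - 1 \<le> (-u * t) mod (Q^m - 1)" if "1 \<le> u" "u < Q^(k + 1)" for u
  proof -
    have "t * 1 \<le> t * (Q^(k + 1) - u)" using that Q_pow_pos[of "m - k - 1"] unfolding t_def
      by (intro mult_left_mono) auto
    then show ?thesis using diag_residue[OF \<open>k < m\<close> that] unfolding t_def by simp
  qed
  have "(t - 1) * (t - 1) \<le> ((-x * t) mod (Q^m - 1)) * ((-y * t) mod (Q^m - 1))"
    using residue[OF x] residue[OF y] Q_pow_ge_1[of "m - k - 1"] unfolding t_def
    by (intro mult_mono) auto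
  then show ?thesis unfolding t_def by (simp add: power2_eq_square)
qed

lemma residue_product_bound_diag_middle:
  assumes "odd m" and x: "1 \<le> x" "x < Q^(m div 2 + 1)" and y: "1 \<le> y" "y < Q^(m div 2 + 1)"
    and xy: "x * y < Q^m - 1 - Q^(m div 2)"
  shows "Q^m \<le> ((-x * Q^(m div 2)) mod (Q^m - 1)) * ((-y * Q^(m div 2)) mod (Q^m - 1))"
proof -
  define n t where "n = Q^m - 1" and "t = Q^(m div 2)"
  have h: "m div 2 < m" "m - m div 2 - 1 = m div 2" using \<open>odd m\<close> m_gt_3 by presburger+
  have st: "Q * t * t = n + 1"
    using Q_pow_diag_split[OF h(1)] unfolding h(2) n_def t_def by (simp add: mult.assoc)
  have residue: "(-u * t) mod n = t * (Q * t - u) - 1" if "1 \<le> u" "u < Q^(m div 2 + 1)" for u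
    using diag_residue[OF h(1) that] unfolding h(2) n_def t_def by simp
  have "2 \<le> m div 2" using m_gt_3 by linarith
  then have "Q^2 \<le> t" unfolding t_def by (rule Q_pow_mono)
  moreover have "2 * Q \<le> Q * Q" using Q_ge_2 by (intro mult_right_mono) auto
  ultimately have "Q + 2 \<le> t" using Q_ge_2 unfolding power2_eq_square by linarith
  moreover have "(Q * t - (Q * t - x)) * (Q * t - (Q * t - y)) \<le> Q * t * t - t - 2"
    using xy st unfolding n_def t_def by simp
  ultimately have "Q * t * t \<le> (t * (Q * t - x) - 1) * (t * (Q * t - y) - 1)"
    using Q_ge_2 x(2) y(2) unfolding t_def by (intro middle_product_bound) auto
  then show ?thesis using residue[OF x] residue[OF y] st unfolding n_def t_def by simp
qed

lemma residue_product_bound_diag_odd: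
  assumes "odd m" and k: "2 * k + 1 \<le> m" and x: "1 \<le> x" "Q^k \<le> x" "x < Q^(k + 1)"
    and y: "1 \<le> y" "y < Q^m - 1" and xy: "x * y < Q^m - 1 - Q^(m div 2)"
  shows "Q^m - 1 \<le> ((-x * Q^(m - k - 1)) mod (Q^m - 1)) * ((-y * Q^(m - k - 1)) mod (Q^m - 1))"
proof (cases "Q^(k + 1) \<le> y")
  case True
  then show ?thesis using residue_product_bound_diag_large_y[OF k x True y(2) xy] by simp
next
  case False
  show ?thesis
  proof (cases "k < m div 2")
    case True
    define n s t where "n = Q^m - 1" and "s = Q^(k + 1)" and "t = Q^(m - k - 1)"
    have st: "s * t = n + 1" unfolding n_def s_def t_def using k Q_pow_diag_split by simp
    have "Q \<le> s" unfolding s_def by (intro Q_le_pow) simp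
    from True \<open>odd m\<close> have "Suc (k + 1) \<le> m - k - 1" by presburger
    then have "Q * s \<le> t" using Q_pow_mono unfolding s_def t_def by (metis power_Suc)
    moreover have "2 * s \<le> Q * s" using Q_ge_2 \<open>Q \<le> s\<close> by (intro mult_right_mono) auto
    ultimately have "0 \<le> t - s - 2" using Q_ge_2 \<open>Q \<le> s\<close> by linarith
    then have "0 \<le> t * (t - s - 2)" using Q_ge_2 \<open>Q \<le> s\<close> by simp
    then have "n \<le> (t - 1)^2" using st by (simp add: power2_eq_square algebra_simps)
    also have "\<dots> \<le> ((-x * t) mod n) * ((-y * t) mod n)"
      unfolding n_def t_def using k x False y(1) by (intro residue_product_bound_diag_small) auto
    finally show ?thesis unfolding n_def t_def .
  next
    case False
    with k \<open>odd m\<close> have "k = m div 2" "m - k - 1 = m div 2" by presburger+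
    then show ?thesis
      using residue_product_bound_diag_middle[OF \<open>odd m\<close> x(1) _ y(1) _ xy] x(3) \<open>\<not> Q^(k + 1) \<le> y\<close>
      by simp
  qed
qed

lemma residue_product_bound_diag_even:
  assumes "even m" and k: "2 * k + 1 \<le> m" and x: "1 \<le> x" "Q^k \<le> x" "x < Q^(k + 1)"
    and y: "1 \<le> y" "y < Q^m - 1" and xy: "x * y < Q^m - 1 - Q^(m div 2)"
  shows "(Q^(m div 2) - 1)^2 \<le> ((-x * Q^(m - k - 1)) mod (Q^m - 1)) * ((-y * Q^(m - k - 1)) mod (Q^m - 1))"
proof (cases "Q^(k + 1) \<le> y")
  case True
  have "(Q^(m div 2) - 1)^2 \<le> Q^(m div 2) * Q^(m div 2)"
    using Q_pow_ge_1[of "m div 2"] by (simp add: power2_eq_square algebra_simps)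
  also have "\<dots> = Q^m" using \<open>even m\<close> by (simp add: Q_pow_half_square)
  finally show ?thesis using residue_product_bound_diag_large_y[OF k x True y(2) xy] by simp
next
  case False
  with k \<open>even m\<close> have "m div 2 \<le> m - k - 1" by presburger
  then have "Q^(m div 2) \<le> Q^(m - k - 1)" by (rule Q_pow_mono)
  then have "Q^(m div 2) - 1 \<le> Q^(m - k - 1) - 1" by simp
  then have "(Q^(m div 2) - 1)^2 \<le> (Q^(m - k - 1) - 1)^2"
    using Q_pow_ge_1[of "m div 2"] by (intro power_mono) auto
  also have "\<dots> \<le> ((-x * Q^(m - k - 1)) mod (Q^m - 1)) * ((-y * Q^(m - k - 1)) mod (Q^m - 1))"
    using k x False y(1) by (intro residue_product_bound_diag_small) auto
  finally show ?thesis .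
qed

lemma offdiag_bound_attained:
  shows "1 \<le> Q^m - 1 - Q^(m div 2 + 1)" and "Q^m - 1 - Q^(m div 2 + 1) < Q^m - 1 - Q^(m div 2)"
    and "((-1 * Q^((m + 1) div 2 - 1)) mod (Q^m - 1))
           * ((-(Q^m - 1 - Q^(m div 2 + 1)) * Q^((m + 1) div 2 - 1)) mod (Q^m - 1))
         = Q^m - 1 - Q^((m + 1) div 2 - 1)"
proof -
  define n t where "n = Q^m - 1" and "t = Q^((m + 1) div 2 - 1)"
  have "m div 2 + 2 \<le> m" using m_gt_3 by linarith
  then have "Q^(m div 2 + 2) \<le> Q^m" by (rule Q_pow_mono)
  moreover have "2 * Q^(m div 2 + 1) \<le> Q^(m div 2 + 2)"
    using Q_ge_2 Q_pow_pos[of "m div 2 + 1"] by simp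
  moreover have "Q \<le> Q^(m div 2 + 1)" by (rule Q_le_pow) simp
  ultimately show "1 \<le> Q^m - 1 - Q^(m div 2 + 1)" using Q_ge_2 by linarith
  have "Q^(m div 2) < Q^(m div 2 + 1)" using Q_gt_1 by simp
  then show "Q^m - 1 - Q^(m div 2 + 1) < Q^m - 1 - Q^(m div 2)" by simp
  have split: "Q^(m - ((m + 1) div 2 - 1)) * t = n + 1"
    unfolding n_def t_def using Q_pow_split[of "(m + 1) div 2 - 1"] by simp
  have "Q \<le> Q^(m - ((m + 1) div 2 - 1))" using m_gt_3 by (intro Q_le_pow) simp
  then have "1 < Q^(m - ((m + 1) div 2 - 1))" using Q_ge_2 by linarith
  moreover have "0 < t" unfolding t_def by (rule Q_pow_pos)
  ultimately have "(-1 * t) mod n = n - 1 * t" by (intro neg_mult_mod_eq_diff[OF split]) simp_all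
  moreover have "(-(n - Q^(m div 2 + 1)) * t) mod n = 1"
  proof -
    have "m div 2 + 1 + ((m + 1) div 2 - 1) = m" using m_gt_3 by presburger
    then have "Q^(m div 2 + 1) * t = n + 1"
      unfolding n_def t_def power_add[symmetric] by (simp only: diff_add_cancel)
    then have "-(n - Q^(m div 2 + 1)) * t = 1 + (1 - t) * n" by (simp add: algebra_simps)
    moreover have "2 \<le> n"
    proof -
      have "Q^2 \<le> Q^m" by (rule Q_pow_mono) (use m_gt_3 in simp)
      moreover have "4 \<le> Q^2" by (rule Q_square_ge_4)
      ultimately show ?thesis unfolding n_def by linarith
    qed
    ultimately show ?thesis by simp
  qed
  ultimately show "((-1 * Q^((m + 1) div 2 - 1)) mod (Q^m - 1))
           * ((-(Q^m - 1 - Q^(m div 2 + 1)) * Q^((m + 1) div 2 - 1)) mod (Q^m - 1))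
         = Q^m - 1 - Q^((m + 1) div 2 - 1)" unfolding n_def t_def by simp
qed

lemma diag_bound_attained:
  assumes "even m"
  shows "1 \<le> Q^(m div 2) - 1" and "Q^(m div 2) - 1 < Q^m - 1"
    and "(Q^(m div 2) - 1) * (Q^(m div 2) - 1) < Q^m - 1 - Q^(m div 2)"
    and "Q^(m div 2 - 1) \<le> Q^(m div 2) - 1"
    and "(-(Q^(m div 2) - 1) * Q^(m div 2)) mod (Q^m - 1) = Q^(m div 2) - 1"
proof -
  define r where "r = Q^(m div 2)"
  have square: "Q^m = r * r" unfolding r_def using \<open>even m\<close> by (rule Q_pow_half_square)
  have "2 \<le> m div 2" using m_gt_3 by linarith
  then have "Q^2 \<le> r" unfolding r_def by (rule Q_pow_mono)
  then have "4 \<le> r" using Q_square_ge_4 by linarith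
  then have "4 * r \<le> r * r" by (intro mult_right_mono) auto
  show "1 \<le> Q^(m div 2) - 1" using \<open>4 \<le> r\<close> unfolding r_def by simp
  show "Q^(m div 2) - 1 < Q^m - 1" using \<open>4 * r \<le> r * r\<close> \<open>4 \<le> r\<close> unfolding square r_def by linarith
  have "(r - 1) * (r - 1) = r * r - 2 * r + 1" by (simp add: algebra_simps)
  then show "(Q^(m div 2) - 1) * (Q^(m div 2) - 1) < Q^m - 1 - Q^(m div 2)"
    using \<open>4 \<le> r\<close> unfolding square r_def[symmetric] by linarith
  have "Q^(m div 2 - 1) < r" unfolding r_def using m_gt_3 Q_gt_1 by simp
  then show "Q^(m div 2 - 1) \<le> Q^(m div 2) - 1" unfolding r_def by simp
  have "-(r - 1) * r = (r - 1) + (-1) * (Q^m - 1)" unfolding square by (simp add: algebra_simps)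
  then have "(-(r - 1) * r) mod (Q^m - 1) = (r - 1) mod (Q^m - 1)" by (simp only: mod_mult_self1)
  also have "\<dots> = r - 1"
    using \<open>4 * r \<le> r * r\<close> \<open>4 \<le> r\<close> unfolding square by (intro mod_pos_pos_trivial) linarith+
  finally show "(-(Q^(m div 2) - 1) * Q^(m div 2)) mod (Q^m - 1) = Q^(m div 2) - 1"
    unfolding r_def .
qed

end

lemma prime_power_ge_2:
  assumes "prime_power q"
  shows "2 \<le> q"
proof -
  obtain p e where p: "prime p" and e: "1 \<le> e" and q: "q = p ^ e"
    using assms unfolding prime_power_def by blast
  have "2 \<le> p" using p by (rule prime_ge_2_nat)
  also have "\<dots> \<le> p ^ e" using e \<open>2 \<le> p\<close> by (intro self_le_power) auto
  finally show ?thesis unfolding q .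
qed

lemma mem_Zdes_k_iff:
  "(x, y) \<in> Zdes_k q m k \<longleftrightarrow>
     1 \<le> x \<and> x < int q ^ m - 1 \<and> 1 \<le> y \<and> y < int q ^ m - 1
     \<and> x * y < int q ^ m - 1 - int q ^ (m div 2) \<and> int q ^ k \<le> x \<and> x < int q ^ (k + 1)"
  unfolding Zdes_k_def Zdes_def by auto

lemma offdiag_witness_mem_Zdes_k:
  assumes q: "2 \<le> int q" and m: "3 < m"
  shows "(1, int q ^ m - 1 - int q ^ (m div 2 + 1)) \<in> Zdes_k q m 0"
proof -
  note y = offdiag_bound_attained(1,2)[OF q m]
  have "1 \<le> int q ^ (m div 2)" using q by simp
  with y have "1 < int q ^ m - 1" "int q ^ m - 1 - int q ^ (m div 2 + 1) < int q ^ m - 1" by linarith+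
  with y q show ?thesis unfolding mem_Zdes_k_iff by simp
qed

lemma diag_witness_mem_Zdes_k:
  assumes q: "2 \<le> int q" and m: "3 < m" and "even m"
  shows "(int q ^ (m div 2) - 1, int q ^ (m div 2) - 1) \<in> Zdes_k q m (m div 2 - 1)"
proof -
  have "m div 2 - 1 + 1 = m div 2" using m by simp
  then show ?thesis using diag_bound_attained(1-4)[OF q m \<open>even m\<close>] unfolding mem_Zdes_k_iff by simp
qed

theorem lemma4:
  fixes q m :: nat
  assumes "prime_power q" and "m > 3"
  shows
    "(\<forall>k l x y. 2 * k + 1 \<le> m \<longrightarrow> (x, y) \<in> Zdes_k q m k \<longrightarrow> l < m \<longrightarrow> l \<noteq> m - k - 1 \<longrightarrow>
        fval q m x y l \<ge> int q ^ m - 1 - int q ^ ((m + 1) div 2 - 1))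
   \<and> ((1, int q ^ m - 1 - int q ^ (m div 2 + 1)) \<in> Zdes_k q m 0
      \<and> (m + 1) div 2 - 1 < m \<and> (m + 1) div 2 - 1 \<noteq> m - 0 - 1
      \<and> fval q m 1 (int q ^ m - 1 - int q ^ (m div 2 + 1)) ((m + 1) div 2 - 1)
          = int q ^ m - 1 - int q ^ ((m + 1) div 2 - 1))
   \<and> (\<forall>k x y. 2 * k + 1 \<le> m \<longrightarrow> (x, y) \<in> Zdes_k q m k \<longrightarrow>
        (odd m \<longrightarrow> fval q m x y (m - k - 1) \<ge> int q ^ m - 1)
      \<and> (even m \<longrightarrow> fval q m x y (m - k - 1) \<ge> (int q ^ (m div 2) - 1)\<^sup>2))
   \<and> (even m \<longrightarrow>
        2 * (m div 2 - 1) + 1 \<le> m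
      \<and> (int q ^ (m div 2) - 1, int q ^ (m div 2) - 1) \<in> Zdes_k q m (m div 2 - 1)
      \<and> m div 2 = m - (m div 2 - 1) - 1
      \<and> fval q m (int q ^ (m div 2) - 1) (int q ^ (m div 2) - 1) (m div 2)
          = (int q ^ (m div 2) - 1)\<^sup>2)"
proof (intro conjI allI impI)
  have q: "2 \<le> int q" using prime_power_ge_2[OF assms(1)] by simp
  note m = \<open>m > 3\<close>
  show "fval q m x y l \<ge> int q ^ m - 1 - int q ^ ((m + 1) div 2 - 1)"
    if "2 * k + 1 \<le> m" "(x, y) \<in> Zdes_k q m k" "l < m" "l \<noteq> m - k - 1" for k l x y
    unfolding fval_def
    by (rule residue_product_bound_offdiag[OF q m that(1,3,4)]) (use that(2) in \<open>auto simp: mem_Zdes_k_iff\<close>)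
  show "(1, int q ^ m - 1 - int q ^ (m div 2 + 1)) \<in> Zdes_k q m 0"
    using q m by (rule offdiag_witness_mem_Zdes_k)
  show "fval q m 1 (int q ^ m - 1 - int q ^ (m div 2 + 1)) ((m + 1) div 2 - 1)
          = int q ^ m - 1 - int q ^ ((m + 1) div 2 - 1)"
    using offdiag_bound_attained(3)[OF q m] unfolding fval_def .
  show "fval q m x y (m - k - 1) \<ge> int q ^ m - 1"
    if "2 * k + 1 \<le> m" "(x, y) \<in> Zdes_k q m k" "odd m" for k x y
    unfolding fval_def
    by (rule residue_product_bound_diag_odd[OF q m that(3,1)]) (use that(2) in \<open>auto simp: mem_Zdes_k_iff\<close>)
  show "fval q m x y (m - k - 1) \<ge> (int q ^ (m div 2) - 1)\<^sup>2"
    if "2 * k + 1 \<le> m" "(x, y) \<in> Zdes_k q m k" "even m" for k x y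
    unfolding fval_def
    by (rule residue_product_bound_diag_even[OF q m that(3,1)]) (use that(2) in \<open>auto simp: mem_Zdes_k_iff\<close>)
  show "(int q ^ (m div 2) - 1, int q ^ (m div 2) - 1) \<in> Zdes_k q m (m div 2 - 1)" if "even m"
    using q m that by (rule diag_witness_mem_Zdes_k)
  show "fval q m (int q ^ (m div 2) - 1) (int q ^ (m div 2) - 1) (m div 2) = (int q ^ (m div 2) - 1)\<^sup>2"
    if "even m"
    using diag_bound_attained(5)[OF q m that] unfolding fval_def by (simp add: power2_eq_square)
qed (use \<open>3 < m\<close> in auto)

end
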